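(* Let $R>0$ and $\Theta=(\alpha,\rho_r,\rho_d,\rho_s,\rho_0,T)$ with $\alpha>1$, $\rho_r,\rho_d,\rho_s,\rho_0>0$, $T>1$; set $\beta=\rho_d/\rho_r$, $\delta=\rho_s/\rho_r$, $\mu=\rho_0/\rho_r$, $K_{max}(\Theta)=\min\big(\frac T4,\frac1{3\mu},\frac{3\beta}{2\mu}\big)$. Suppose $K_{max}(\Theta)>10$, $\rho_r>\frac{\alpha}{2\delta}$, $\rho_r>\frac{3\alpha}{4(1+\beta)^2R}g^2\big(\frac{4R}{3K_{max}(\Theta)}\big)$ and $\rho_r<\frac{\alpha}{(1+\beta)^2}\frac{g^2(R)}{R}$. Then $$\zeta'_{zf}(R,\Theta)>\frac38\,\zeta'_{csi}\Big(\frac{4R}{3},\Theta\Big)>\frac38\,\zeta'_{csi}(R,\Theta).$$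
   Context: $g(x)=\sqrt{\frac{x}{2^x-1}}\big(2^x x\ln2-2^x+1\big)$, $x>0$. For rate $r>0$ and reals $M>K$, $1\le K\le\tau<T$, $$\gamma_u=\frac{K+\tau}{2\tau(M-K)}\Big(2^{\frac{r}{K(1-\tau/T)}}-1\Big)+\sqrt{\Big(\frac{K+\tau}{2\tau(M-K)}\Big(2^{\frac{r}{K(1-\tau/T)}}-1\Big)\Big)^2+\frac{2^{\frac{r}{K(1-\tau/T)}}-1}{\tau(M-K)}},$$ $$\frac{r}{\zeta_{zf}(M,K,\tau,r,\Theta)}=\alpha K\gamma_u+\rho_s+K\Big(\rho_d+\frac{8K^2\rho_0}{3T}\Big)+M\Big(\rho_r+2K\rho_0+\frac{4K^2\rho_0}{T}\Big).$$ $\zeta'_{zf}(r,\Theta)$ is the supremum of $\zeta_{zf}$ over real $(M,K,\tau)$ with $1\le K\le K_{max}(\Theta)$, $K\le\tau<T$, $M>K$. For real $M>K\ge1$, $\frac{1}{\zeta_{csi}(M,K,r,\Theta)}=\frac1r\big[\frac{\alpha K}{M-K}(2^{r/K}-1)+M\rho_r+K\rho_d+\rho_s\big]$ and $\zeta'_{csi}(r,\Theta)$ is its maximum over real $(M,K)$ with $1\le K\le K_{max}(\Theta)$, $M>K$. *)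

theory Defs
  imports Complex_Main
begin

definition g :: "real \<Rightarrow> real" where
  "g x = sqrt (x / (2 powr x - 1)) * (2 powr x * x * ln 2 - 2 powr x + 1)"

definition gamma_u :: "real \<Rightarrow> real \<Rightarrow> real \<Rightarrow> real \<Rightarrow> real \<Rightarrow> real" where
  "gamma_u T M K \<tau> r =
     (let c = (K + \<tau>) / (2 * \<tau> * (M - K)) * (2 powr (r / (K * (1 - \<tau> / T))) - 1)
      in c + sqrt (c\<^sup>2 + (2 powr (r / (K * (1 - \<tau> / T))) - 1) / (\<tau> * (M - K))))"

text \<open>Theta = (alpha, rho_r, rho_d, rho_s, rho_0, T), passed as separate reals.\<close>

definition zeta_zf :: "real \<Rightarrow> real \<Rightarrow> real \<Rightarrow> real \<Rightarrow> real \<Rightarrow> real \<Rightarrow> real \<Rightarrow> real \<Rightarrow> real \<Rightarrow> real \<Rightarrow> real" where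
  "zeta_zf M K \<tau> r \<alpha> \<rho>r \<rho>d \<rho>s \<rho>0 T =
     r / (\<alpha> * K * gamma_u T M K \<tau> r + \<rho>s + K * (\<rho>d + 8 * K\<^sup>2 * \<rho>0 / (3 * T))
          + M * (\<rho>r + 2 * K * \<rho>0 + 4 * K\<^sup>2 * \<rho>0 / T))"

definition Kmax :: "real \<Rightarrow> real \<Rightarrow> real \<Rightarrow> real \<Rightarrow> real \<Rightarrow> real \<Rightarrow> real" where
  "Kmax \<alpha> \<rho>r \<rho>d \<rho>s \<rho>0 T =
     min (T / 4) (min (1 / (3 * (\<rho>0 / \<rho>r))) (3 * (\<rho>d / \<rho>r) / (2 * (\<rho>0 / \<rho>r))))"

definition zeta_zf' :: "real \<Rightarrow> real \<Rightarrow> real \<Rightarrow> real \<Rightarrow> real \<Rightarrow> real \<Rightarrow> real \<Rightarrow> real" where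
  "zeta_zf' r \<alpha> \<rho>r \<rho>d \<rho>s \<rho>0 T =
     Sup {zeta_zf M K \<tau> r \<alpha> \<rho>r \<rho>d \<rho>s \<rho>0 T | M K \<tau>.
            1 \<le> K \<and> K \<le> Kmax \<alpha> \<rho>r \<rho>d \<rho>s \<rho>0 T \<and> K \<le> \<tau> \<and> \<tau> < T \<and> K < M}"

definition zeta_csi :: "real \<Rightarrow> real \<Rightarrow> real \<Rightarrow> real \<Rightarrow> real \<Rightarrow> real \<Rightarrow> real \<Rightarrow> real \<Rightarrow> real \<Rightarrow> real" where
  "zeta_csi M K r \<alpha> \<rho>r \<rho>d \<rho>s \<rho>0 T =
     1 / ((1 / r) * (\<alpha> * K / (M - K) * (2 powr (r / K) - 1) + M * \<rho>r + K * \<rho>d + \<rho>s))"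

definition zeta_csi' :: "real \<Rightarrow> real \<Rightarrow> real \<Rightarrow> real \<Rightarrow> real \<Rightarrow> real \<Rightarrow> real \<Rightarrow> real" where
  "zeta_csi' r \<alpha> \<rho>r \<rho>d \<rho>s \<rho>0 T =
     Sup {zeta_csi M K r \<alpha> \<rho>r \<rho>d \<rho>s \<rho>0 T | M K.
            1 \<le> K \<and> K \<le> Kmax \<alpha> \<rho>r \<rho>d \<rho>s \<rho>0 T \<and> K < M}"

end

theory Submission
  imports Defs
begin

(* Zero-forcing: take tau = T/4, so that the rate exponent R / (K (1 - tau/T)) becomes (4R/3)/K.
   The estimate gamma_u <= 2 E/(M - K) + 1/(K + tau) and K <= Kmax (which keeps the rho0-terms
   below rho_d and rho_r) bound the ZF denominator at rate R by twice the CSI denominator at rate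
   4R/3 minus rho_s - alpha/2 > 0; this slack makes the factor 3/8 strict.

   Perfect CSI: by AM-GM in M - K, zeta'_csi(r) is the maximum over K in [1, Kmax] of r / P(r, K)
   with P(r, K) = 2 sqrt(alpha rho_r K (2^(r/K) - 1)) + K (rho_r + rho_d) + rho_s, attained by
   compactness.  At the maximiser K for rate R, either 4K/3 <= Kmax and scaling (r, K) by 4/3
   strictly improves the ratio, or K > 3 Kmax / 4 and we compare with Kmax at rate 4R/3.  The latter
   amounts to x |-> (2 B sqrt(2^x - 1) + C) / x being decreasing on (0, 4R/(3 Kmax)]; its
   derivative is negative as long as B^2 g(x)^2 / x < C^2, and g(x)^2 / x is increasing, so the
   hypothesis on g at 4R/(3 Kmax) is exactly what is needed. *)

lemma mult_exp_minus_exp_plus_one_nonneg: "0 \<le> y * exp y - exp y + (1::real)"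
proof -
  have "exp y * (1 - y) \<le> exp y * exp (-y)"
    using exp_ge_add_one_self[of "-y"] by (intro mult_left_mono) auto
  then show ?thesis by (simp add: exp_minus algebra_simps)
qed

definition g_kernel :: "real \<Rightarrow> real" where
  "g_kernel y = (y * exp y - exp y + 1)\<^sup>2 / (exp y - 1)"

lemma g_squared:
  assumes "x > 0"
  shows "(g x)\<^sup>2 = x * g_kernel (ln 2 * x)"
proof -
  have pow: "2 powr x = exp (ln 2 * x)" by (simp add: powr_def mult.commute)
  have "exp (ln 2 * x) > 1" using assms by simp
  then have "(sqrt (x / (exp (ln 2 * x) - 1)))\<^sup>2 = x / (exp (ln 2 * x) - 1)"
    using assms by simp
  then show ?thesis
    unfolding g_def g_kernel_def pow power_mult_distrib
    by (simp add: ac_simps)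
qed

lemma has_real_derivative_g_kernel:
  assumes "y > 0"
  shows "(g_kernel has_real_derivative
     exp y * (y * exp y - exp y + 1) * (y * exp y - 2 * y + exp y - 1) / (exp y - 1)\<^sup>2) (at y)"
proof -
  define p where "p = y * exp y - exp y + 1"
  have "exp y \<noteq> 1" using assms by simp
  have "((\<lambda>y. y * exp y - exp y + 1) has_real_derivative y * exp y) (at y)"
    by (auto intro!: derivative_eq_intros)
  from DERIV_divide[OF DERIV_power[OF this, of 2] DERIV_diff[OF DERIV_exp DERIV_const[of 1]]]
  have "(g_kernel has_real_derivative
      (2 * (y * exp y * p) * (exp y - 1) - p\<^sup>2 * exp y) / ((exp y - 1) * (exp y - 1))) (at y)"
    using \<open>exp y \<noteq> 1\<close> by (simp add: g_kernel_def [abs_def] p_def)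
  moreover have "2 * (y * exp y * p) * (exp y - 1) - p\<^sup>2 * exp y
      = exp y * p * (y * exp y - 2 * y + exp y - 1)"
    unfolding p_def power2_eq_square by (simp add: algebra_simps)
  ultimately show ?thesis by (simp add: p_def power2_eq_square)
qed

lemma g_kernel_mono:
  assumes "0 < a" "a \<le> b"
  shows "g_kernel a \<le> g_kernel b"
proof (rule DERIV_nonneg_imp_nondecreasing[OF assms(2)])
  fix y assume "a \<le> y" "y \<le> b"
  then have y: "y > 0" using assms by simp
  have "exp y \<ge> 1 + y" by (rule exp_ge_add_one_self)
  moreover have "y * exp y \<ge> y + y * y"
    using mult_left_mono[OF \<open>exp y \<ge> 1 + y\<close>, of y] y by (simp add: distrib_left)
  moreover have "y * y \<ge> 0" by simp
  ultimately have "y * exp y - 2 * y + exp y - 1 \<ge> 0" by linarith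
  then have "0 \<le> exp y * (y * exp y - exp y + 1) * (y * exp y - 2 * y + exp y - 1) / (exp y - 1)\<^sup>2"
    using mult_exp_minus_exp_plus_one_nonneg[of y] by simp
  then show "\<exists>d. (g_kernel has_real_derivative d) (at y) \<and> 0 \<le> d"
    using has_real_derivative_g_kernel[OF y] by blast
qed

lemma g_kernel_slope_bound:
  fixes B C y :: real
  assumes "y > 0" "B \<ge> 0" "C \<ge> 0" "B\<^sup>2 * g_kernel y < C\<^sup>2"
  shows "B * y * exp y / sqrt (exp y - 1) - 2 * B * sqrt (exp y - 1) < C"
proof -
  define u where "u = sqrt (exp y - 1)"
  define p where "p = y * exp y - exp y + 1"
  have "exp y > 1" using assms by simp
  then have u: "u > 0" "u\<^sup>2 = exp y - 1" by (simp_all add: u_def)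
  have "B * y * exp y / u - 2 * B * u = B * (y * exp y - 2 * u\<^sup>2) / u"
    using u by (simp add: field_simps power2_eq_square)
  also have "\<dots> = B * (p - u\<^sup>2) / u" using u(2) by (simp add: p_def)
  also have "\<dots> = B * p / u - B * u" using u by (simp add: field_simps power2_eq_square)
  finally have split: "B * y * exp y / u - 2 * B * u = B * p / u - B * u" .
  have "(B * p / u)\<^sup>2 = B\<^sup>2 * (p\<^sup>2 / u\<^sup>2)"
    by (simp only: power_divide power_mult_distrib times_divide_eq_right)
  also have "\<dots> = B\<^sup>2 * g_kernel y" by (simp only: g_kernel_def p_def u(2))
  finally have "(B * p / u)\<^sup>2 < C\<^sup>2" using assms(4) by simp
  then have "B * p / u < C" using assms(3) by (rule power2_less_imp_less)
  moreover have "B * u \<ge> 0" using assms u by simp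
  ultimately show ?thesis unfolding u_def[symmetric] split by linarith
qed
lemma has_real_derivative_sqrt_exp_quotient:
  fixes L B C x :: real
  assumes "L > 0" "x > 0"
  shows "((\<lambda>x. (2 * B * sqrt (exp (L * x) - 1) + C) / x) has_real_derivative
     (B * (L * x) * exp (L * x) / sqrt (exp (L * x) - 1) - 2 * B * sqrt (exp (L * x) - 1) - C)
       / x\<^sup>2) (at x)"
proof -
  have "exp (L * x) > 1" using assms by simp
  have "((\<lambda>x. exp (L * x) - 1) has_real_derivative L * exp (L * x)) (at x)"
    by (auto intro!: derivative_eq_intros)
  then have "((\<lambda>x. sqrt (exp (L * x) - 1)) has_real_derivative
      inverse (sqrt (exp (L * x) - 1)) / 2 * (L * exp (L * x))) (at x)"
    using \<open>exp (L * x) > 1\<close> by (intro DERIV_chain2[OF DERIV_real_sqrt]) auto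
  note quotient =
    DERIV_divide[OF DERIV_add[OF DERIV_cmult[OF this, of "2 * B"] DERIV_const[of C]] DERIV_ident]
  have "sqrt (exp (L * x) - 1) > 0" using \<open>exp (L * x) > 1\<close> by simp
  then show ?thesis
    using assms by (intro DERIV_cong[OF quotient]) (auto simp: field_simps power2_eq_square)
qed

lemma sqrt_exp_quotient_strict_antimono:
  fixes L B C x0 x1 :: real
  assumes "L > 0" "B \<ge> 0" "C > 0" "0 < x1" "x1 < x0" "B\<^sup>2 * g_kernel (L * x0) < C\<^sup>2"
  shows "(2 * B * sqrt (exp (L * x0) - 1) + C) / x0 < (2 * B * sqrt (exp (L * x1) - 1) + C) / x1"
proof (rule DERIV_neg_imp_decreasing[OF assms(5)])
  fix x assume x: "x1 \<le> x" "x \<le> x0"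
  then have "x > 0" using assms by simp
  have "B\<^sup>2 * g_kernel (L * x) \<le> B\<^sup>2 * g_kernel (L * x0)"
    using g_kernel_mono[of "L * x" "L * x0"] x assms \<open>x > 0\<close> by (intro mult_left_mono) auto
  then have "B * (L * x) * exp (L * x) / sqrt (exp (L * x) - 1) - 2 * B * sqrt (exp (L * x) - 1)
      < C"
    using assms \<open>x > 0\<close> by (intro g_kernel_slope_bound) auto
  then have "(B * (L * x) * exp (L * x) / sqrt (exp (L * x) - 1) - 2 * B * sqrt (exp (L * x) - 1)
      - C) / x\<^sup>2 < 0"
    using \<open>x > 0\<close> by (simp add: divide_neg_pos)
  then show "\<exists>d. ((\<lambda>x. (2 * B * sqrt (exp (L * x) - 1) + C) / x) has_real_derivative d) (at x)
      \<and> d < 0"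
    using has_real_derivative_sqrt_exp_quotient[OF assms(1) \<open>x > 0\<close>] by blast
qed

lemma gamma_u_bounds:
  fixes T M K \<tau> r :: real
  assumes "0 < K" "K \<le> \<tau>" "\<tau> < T" "K < M" "r > 0"
  shows "0 \<le> gamma_u T M K \<tau> r"
    and "gamma_u T M K \<tau> r \<le> 2 * ((2 powr (r / (K * (1 - \<tau> / T))) - 1) / (M - K)) + 1 / (K + \<tau>)"
proof -
  define a where "a = (2 powr (r / (K * (1 - \<tau> / T))) - 1) / (M - K)"
  define s where "s = (K + \<tau>) / (2 * \<tau>)"
  have "1 - \<tau> / T > 0" using assms by (simp add: field_simps)
  then have "a > 0" using assms by (simp add: a_def)
  have "\<tau> > 0" using assms by simp
  then have s: "0 \<le> s" "s \<le> 1" using assms by (auto simp: s_def field_simps)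
  have gamma: "gamma_u T M K \<tau> r = s * a + sqrt ((s * a)\<^sup>2 + a / \<tau>)"
    by (simp add: gamma_u_def Let_def a_def s_def)
  have "0 \<le> s * a" using s \<open>a > 0\<close> by simp
  moreover have "0 \<le> a / \<tau>" using \<open>a > 0\<close> \<open>\<tau> > 0\<close> by simp
  ultimately show "0 \<le> gamma_u T M K \<tau> r" unfolding gamma by simp
  \<comment> \<open>the cross term of the square below is exactly the radicand's linear term\<close>
  have "K + \<tau> \<noteq> 0" using assms \<open>\<tau> > 0\<close> by simp
  then have "2 * (s * a) * (1 / (K + \<tau>)) = a / \<tau>" by (simp add: s_def)
  then have "(s * a)\<^sup>2 + a / \<tau> \<le> (s * a + 1 / (K + \<tau>))\<^sup>2"
    by (simp add: power2_sum)
  then have "sqrt ((s * a)\<^sup>2 + a / \<tau>) \<le> sqrt ((s * a + 1 / (K + \<tau>))\<^sup>2)"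
    by (rule real_sqrt_le_mono)
  also have "\<dots> = s * a + 1 / (K + \<tau>)" using \<open>0 \<le> s * a\<close> \<open>\<tau> > 0\<close> assms by simp
  finally have "sqrt ((s * a)\<^sup>2 + a / \<tau>) \<le> s * a + 1 / (K + \<tau>)" .
  moreover have "s * a \<le> a" using s \<open>a > 0\<close> by (simp add: mult_left_le_one_le)
  ultimately show "gamma_u T M K \<tau> r \<le> 2 * a + 1 / (K + \<tau>)" unfolding gamma by linarith
qed

locale power_model =
  fixes \<alpha> \<rho>r \<rho>d \<rho>s \<rho>0 T :: real
  assumes \<alpha>_pos: "\<alpha> > 0" and \<rho>r_pos: "\<rho>r > 0" and \<rho>d_pos: "\<rho>d > 0"
    and \<rho>s_pos: "\<rho>s > 0" and \<rho>0_pos: "\<rho>0 > 0" and T_pos: "T > 0"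
begin

abbreviation "Km \<equiv> Kmax \<alpha> \<rho>r \<rho>d \<rho>s \<rho>0 T"
abbreviation "csi M K r \<equiv> zeta_csi M K r \<alpha> \<rho>r \<rho>d \<rho>s \<rho>0 T"
abbreviation "csi' r \<equiv> zeta_csi' r \<alpha> \<rho>r \<rho>d \<rho>s \<rho>0 T"
abbreviation "zf M K \<tau> r \<equiv> zeta_zf M K \<tau> r \<alpha> \<rho>r \<rho>d \<rho>s \<rho>0 T"
abbreviation "zf' r \<equiv> zeta_zf' r \<alpha> \<rho>r \<rho>d \<rho>s \<rho>0 T"

definition csi_denom :: "real \<Rightarrow> real \<Rightarrow> real \<Rightarrow> real" where
  "csi_denom M K r = \<alpha> * K / (M - K) * (2 powr (r / K) - 1) + M * \<rho>r + K * \<rho>d + \<rho>s"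

(* the minimum of csi_denom M K r over M > K,
   attained at M = K + sqrt (alpha K (2^(r/K) - 1) / rho_r) *)
definition csi_opt_denom :: "real \<Rightarrow> real \<Rightarrow> real" where
  "csi_opt_denom r K = 2 * sqrt (\<alpha> * \<rho>r * K * (2 powr (r / K) - 1)) + K * (\<rho>r + \<rho>d) + \<rho>s"

definition zf_denom :: "real \<Rightarrow> real \<Rightarrow> real \<Rightarrow> real \<Rightarrow> real" where
  "zf_denom M K \<tau> r = \<alpha> * K * gamma_u T M K \<tau> r + \<rho>s + K * (\<rho>d + 8 * K\<^sup>2 * \<rho>0 / (3 * T))
     + M * (\<rho>r + 2 * K * \<rho>0 + 4 * K\<^sup>2 * \<rho>0 / T)"

lemma zeta_csi_eq: "csi M K r = r / csi_denom M K r"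
  by (simp add: zeta_csi_def csi_denom_def)

lemma zeta_zf_eq: "zf M K \<tau> r = r / zf_denom M K \<tau> r"
  by (simp add: zeta_zf_def zf_denom_def)

lemma csi_denom_ge:
  assumes "0 < K" "K < M" "r \<ge> 0"
  shows "\<rho>s \<le> csi_denom M K r"
proof -
  have "0 \<le> 2 powr (r / K) - 1" using assms by (simp add: ge_one_powr_ge_zero)
  then show ?thesis using assms \<alpha>_pos \<rho>r_pos \<rho>d_pos by (simp add: csi_denom_def)
qed

lemma zf_denom_ge:
  assumes "0 < K" "K \<le> \<tau>" "\<tau> < T" "K < M" "r > 0"
  shows "\<rho>s \<le> zf_denom M K \<tau> r"
proof -
  have "0 \<le> gamma_u T M K \<tau> r" using gamma_u_bounds(1)[OF assms] .
  then show ?thesis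
    using assms \<alpha>_pos \<rho>r_pos \<rho>d_pos \<rho>0_pos T_pos by (simp add: zf_denom_def)
qed

lemma csi_opt_denom_ge:
  assumes "0 < K" "r \<ge> 0"
  shows "\<rho>s \<le> csi_opt_denom r K"
proof -
  have "0 \<le> 2 powr (r / K) - 1" using assms by (simp add: ge_one_powr_ge_zero)
  then show ?thesis using assms \<alpha>_pos \<rho>r_pos \<rho>d_pos by (simp add: csi_opt_denom_def)
qed

lemma csi_opt_denom_le:
  assumes "0 < K" "K < M" "r \<ge> 0"
  shows "csi_opt_denom r K \<le> csi_denom M K r"
proof -
  define E where "E = 2 powr (r / K) - 1"
  have "0 \<le> E" using assms by (simp add: E_def ge_one_powr_ge_zero)
  then have "sqrt (\<alpha> * K * E / (M - K) * ((M - K) * \<rho>r)) \<le> (\<alpha> * K * E / (M - K) + (M - K) * \<rho>r) / 2"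
    using assms \<alpha>_pos \<rho>r_pos by (intro arith_geo_mean_sqrt) auto
  moreover have "\<alpha> * K * E / (M - K) * ((M - K) * \<rho>r) = \<alpha> * \<rho>r * K * E"
    using assms by (simp add: field_simps)
  ultimately show ?thesis
    unfolding csi_opt_denom_def csi_denom_def E_def[symmetric] by (simp add: algebra_simps)
qed

lemma csi_opt_denom_attained:
  assumes "0 < K" "r > 0"
  obtains M where "K < M" "csi_denom M K r = csi_opt_denom r K"
proof -
  define E where "E = 2 powr (r / K) - 1"
  have "0 < E" using assms by (simp add: E_def)
  define m where "m = sqrt (\<alpha> * K * E / \<rho>r)"
  have "m > 0" using assms \<open>0 < E\<close> \<alpha>_pos \<rho>r_pos by (simp add: m_def)
  have "m\<^sup>2 = \<alpha> * K * E / \<rho>r" using assms \<open>0 < E\<close> \<alpha>_pos \<rho>r_pos by (simp add: m_def)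
  then have "(m * \<rho>r)\<^sup>2 = \<alpha> * \<rho>r * K * E" "\<alpha> * K * E / m = m * \<rho>r"
    using \<open>m > 0\<close> \<rho>r_pos by (simp_all add: power2_eq_square field_simps)
  then have "sqrt (\<alpha> * \<rho>r * K * E) = m * \<rho>r"
    using \<open>m > 0\<close> \<rho>r_pos by (simp add: real_sqrt_unique)
  then have "csi_denom (K + m) K r = csi_opt_denom r K"
    using \<open>\<alpha> * K * E / m = m * \<rho>r\<close>
    unfolding csi_denom_def csi_opt_denom_def E_def[symmetric] by (simp add: algebra_simps)
  then show ?thesis using \<open>m > 0\<close> by (intro that[of "K + m"]) auto
qed

lemma zeta_csi_le:
  assumes "0 < K" "K < M" "r > 0"
  shows "csi M K r \<le> r / csi_opt_denom r K"
  unfolding zeta_csi_eq using assms csi_opt_denom_le csi_opt_denom_ge \<rho>s_pos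
  by (intro frac_le) (auto intro: order.strict_trans2)

lemma bdd_above_zeta_csi:
  assumes "r > 0"
  shows "bdd_above {csi M K r | M K. 1 \<le> K \<and> K \<le> Km \<and> K < M}"
proof (rule bdd_aboveI)
  fix z assume "z \<in> {csi M K r | M K. 1 \<le> K \<and> K \<le> Km \<and> K < M}"
  then obtain M K where "z = csi M K r" "1 \<le> K" "K < M" by blast
  then show "z \<le> r / \<rho>s"
    using assms csi_denom_ge[of K M r] \<rho>s_pos by (auto simp: zeta_csi_eq intro!: frac_le)
qed

lemma zeta_csi'_ge:
  assumes "r > 0" "1 \<le> K" "K \<le> Km"
  shows "r / csi_opt_denom r K \<le> csi' r"
proof -
  obtain M where "K < M" "csi_denom M K r = csi_opt_denom r K"
    using csi_opt_denom_attained[of K r] assms by auto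
  then have "csi M K r = r / csi_opt_denom r K" by (simp add: zeta_csi_eq)
  moreover have "csi M K r \<le> csi' r"
    unfolding zeta_csi'_def using assms \<open>K < M\<close>
    by (intro cSup_upper bdd_above_zeta_csi) auto
  ultimately show ?thesis by simp
qed

lemma zeta_csi'_le:
  assumes "Km \<ge> 1" "\<And>M K. 1 \<le> K \<Longrightarrow> K \<le> Km \<Longrightarrow> K < M \<Longrightarrow> csi M K r \<le> b"
  shows "csi' r \<le> b"
proof -
  have "csi 2 1 r \<in> {csi M K r | M K. 1 \<le> K \<and> K \<le> Km \<and> K < M}"
    using assms(1) by force
  then show ?thesis
    unfolding zeta_csi'_def using assms(2) by (intro cSup_least) auto
qed

lemma zeta_csi'_attained:
  assumes "r > 0" "Km \<ge> 1"
  obtains K where "1 \<le> K" "K \<le> Km" "csi' r = r / csi_opt_denom r K"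
proof -
  have "continuous_on {1..Km} (csi_opt_denom r)"
    unfolding csi_opt_denom_def by (intro continuous_intros) auto
  then obtain K where K: "K \<in> {1..Km}"
    and min: "\<And>K'. K' \<in> {1..Km} \<Longrightarrow> csi_opt_denom r K \<le> csi_opt_denom r K'"
    using continuous_attains_inf[of "{1..Km}" "csi_opt_denom r"] assms by auto
  have "csi' r \<le> r / csi_opt_denom r K"
  proof (rule zeta_csi'_le[OF assms(2)])
    fix M K' assume "1 \<le> K'" "K' \<le> Km" "K' < M"
    then have "csi M K' r \<le> r / csi_opt_denom r K'" using zeta_csi_le assms by simp
    also have "\<dots> \<le> r / csi_opt_denom r K"
      using min[of K'] \<open>1 \<le> K'\<close> \<open>K' \<le> Km\<close> K csi_opt_denom_ge \<rho>s_pos assms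
      by (intro frac_le) (auto intro: order.strict_trans2)
    finally show "csi M K' r \<le> r / csi_opt_denom r K" .
  qed
  moreover have "r / csi_opt_denom r K \<le> csi' r" using K assms by (intro zeta_csi'_ge) auto
  ultimately show ?thesis using that K by force
qed

lemma zeta_zf'_ge:
  assumes "1 \<le> K" "K \<le> Km" "K \<le> \<tau>" "\<tau> < T" "K < M" "r > 0"
  shows "zf M K \<tau> r \<le> zf' r"
  unfolding zeta_zf'_def
proof (rule cSup_upper)
  show "bdd_above {zf M K \<tau> r | M K \<tau>. 1 \<le> K \<and> K \<le> Km \<and> K \<le> \<tau> \<and> \<tau> < T \<and> K < M}"
  proof (rule bdd_aboveI)
    fix z assume "z \<in> {zf M K \<tau> r | M K \<tau>. 1 \<le> K \<and> K \<le> Km \<and> K \<le> \<tau> \<and> \<tau> < T \<and> K < M}"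
    then obtain M K \<tau> where "z = zf M K \<tau> r" "1 \<le> K" "K \<le> \<tau>" "\<tau> < T" "K < M" by blast
    then show "z \<le> r / \<rho>s"
      using assms zf_denom_ge[of K \<tau> M r] \<rho>s_pos by (auto simp: zeta_zf_eq intro!: frac_le)
  qed
qed (use assms in blast)

lemma Kmax_bounds: "Km \<le> T / 4" "3 * \<rho>0 * Km \<le> \<rho>r" "2 * \<rho>0 * Km \<le> 3 * \<rho>d"
proof -
  show "Km \<le> T / 4" unfolding Kmax_def by simp
  have "Km \<le> 1 / (3 * (\<rho>0 / \<rho>r))" "Km \<le> 3 * (\<rho>d / \<rho>r) / (2 * (\<rho>0 / \<rho>r))"
    unfolding Kmax_def by simp_all
  then show "3 * \<rho>0 * Km \<le> \<rho>r" "2 * \<rho>0 * Km \<le> 3 * \<rho>d"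
    using \<rho>r_pos \<rho>0_pos by (simp_all add: field_simps)
qed

lemma zf_denom_quarter_le:
  assumes "1 \<le> K" "K \<le> Km" "K < M" "R > 0"
  shows "zf_denom M K (T / 4) R \<le> 2 * csi_denom M K (4 * R / 3) - (\<rho>s - \<alpha> / 2)"
proof -
  define E where "E = 2 powr ((4 * R / 3) / K) - 1"
  have K: "K \<le> T / 4" "3 * \<rho>0 * K \<le> \<rho>r" "2 * \<rho>0 * K \<le> 3 * \<rho>d"
    using Kmax_bounds assms(2) \<rho>0_pos by (smt (verit) mult_left_mono)+
  have rate: "R / (K * (1 - (T / 4) / T)) = (4 * R / 3) / K" using T_pos by (simp add: field_simps)
  have "gamma_u T M K (T / 4) R \<le> 2 * (E / (M - K)) + 1 / (K + T / 4)"
    using gamma_u_bounds(2)[of K "T / 4" T M R] assms K T_pos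
    unfolding rate E_def by simp
  then have "\<alpha> * K * gamma_u T M K (T / 4) R \<le> \<alpha> * K * (2 * (E / (M - K)) + 1 / (K + T / 4))"
    using assms \<alpha>_pos by (intro mult_left_mono) auto
  moreover have "\<alpha> * K * (1 / (K + T / 4)) \<le> \<alpha> / 2"
    using assms K \<alpha>_pos by (simp add: field_simps)
  moreover have "\<alpha> * K * (2 * (E / (M - K)) + 1 / (K + T / 4))
      = 2 * (\<alpha> * K / (M - K) * E) + \<alpha> * K * (1 / (K + T / 4))"
    by (simp add: algebra_simps)
  ultimately have gamma: "\<alpha> * K * gamma_u T M K (T / 4) R \<le> 2 * (\<alpha> * K / (M - K) * E) + \<alpha> / 2"
    by linarith
  have "K\<^sup>2 / T \<le> K / 4" using assms K T_pos by (simp add: field_simps power2_eq_square)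
  have "8 * K\<^sup>2 * \<rho>0 / (3 * T) = (8 * \<rho>0 / 3) * (K\<^sup>2 / T)" by simp
  also have "\<dots> \<le> (8 * \<rho>0 / 3) * (K / 4)"
    using \<open>K\<^sup>2 / T \<le> K / 4\<close> \<rho>0_pos by (intro mult_left_mono) auto
  also have "\<dots> \<le> \<rho>d" using K(3) by (simp add: ac_simps)
  finally have "8 * K\<^sup>2 * \<rho>0 / (3 * T) \<le> \<rho>d" .
  have "4 * K\<^sup>2 * \<rho>0 / T = (4 * \<rho>0) * (K\<^sup>2 / T)" by simp
  also have "\<dots> \<le> (4 * \<rho>0) * (K / 4)"
    using \<open>K\<^sup>2 / T \<le> K / 4\<close> \<rho>0_pos by (intro mult_left_mono) auto
  finally have "4 * K\<^sup>2 * \<rho>0 / T \<le> \<rho>0 * K" by simp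
  with \<open>8 * K\<^sup>2 * \<rho>0 / (3 * T) \<le> \<rho>d\<close>
  have "K * (\<rho>d + 8 * K\<^sup>2 * \<rho>0 / (3 * T)) \<le> K * (2 * \<rho>d)"
    and "M * (\<rho>r + 2 * K * \<rho>0 + 4 * K\<^sup>2 * \<rho>0 / T) \<le> M * (2 * \<rho>r)"
    using assms K(2) by (intro mult_left_mono; simp add: ac_simps)+
  then show ?thesis
    using gamma unfolding zf_denom_def csi_denom_def E_def[symmetric] by (simp add: algebra_simps)
qed

lemma zeta_zf'_gt_zeta_csi':
  assumes "R > 0" "Km \<ge> 1" "\<alpha> / 2 < \<rho>s"
  shows "3 / 8 * csi' (4 * R / 3) < zf' R"
proof -
  have zf_le: "zf M K (T / 4) R \<le> zf' R" if "1 \<le> K" "K \<le> Km" "K < M" for M K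
    using that assms Kmax_bounds T_pos by (intro zeta_zf'_ge) auto
  have "0 < zf 2 1 (T / 4) R"
    using zf_denom_ge[of 1 "T / 4" 2 R] Kmax_bounds assms T_pos \<rho>s_pos by (simp add: zeta_zf_eq)
  then have "zf' R > 0" using zf_le[of 1 2] assms by simp
  define X where "X = R / zf' R + (\<rho>s - \<alpha> / 2)"
  have "X > 0" using assms \<open>zf' R > 0\<close> by (simp add: X_def add_pos_pos)
  \<comment> \<open>compare \<open>\<zeta>_csi\<close> at rate \<open>4R/3\<close> with \<open>\<zeta>_zf\<close> at rate \<open>R\<close>, the same \<open>(M, K)\<close> and \<open>\<tau> = T/4\<close>\<close>
  have "csi M K (4 * R / 3) \<le> (8 * R / 3) / X" if "1 \<le> K" "K \<le> Km" "K < M" for M K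
  proof -
    have "0 < zf_denom M K (T / 4) R"
      using zf_denom_ge[of K "T / 4" M R] that Kmax_bounds assms T_pos \<rho>s_pos by simp
    then have "R / zf' R \<le> zf_denom M K (T / 4) R"
      using zf_le[OF that] \<open>zf' R > 0\<close> assms by (simp add: zeta_zf_eq field_simps)
    then have "X \<le> 2 * csi_denom M K (4 * R / 3)"
      using zf_denom_quarter_le[OF that assms(1)] by (simp add: X_def)
    then have "(8 * R / 3) / (2 * csi_denom M K (4 * R / 3)) \<le> (8 * R / 3) / X"
      using assms \<open>X > 0\<close> by (intro frac_le) auto
    then show ?thesis by (simp add: zeta_csi_eq)
  qed
  then have "csi' (4 * R / 3) \<le> (8 * R / 3) / X"
    using assms by (intro zeta_csi'_le) auto
  moreover have "R < zf' R * X"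
    using \<open>zf' R > 0\<close> assms by (simp add: X_def distrib_left)
  then have "R / X < zf' R" using \<open>X > 0\<close> by (simp add: pos_divide_less_eq mult.commute)
  ultimately show ?thesis by simp
qed

lemma csi_opt_ratio_lt_scaled:
  assumes "c > 1" "K > 0" "r > 0"
  shows "r / csi_opt_denom r K < (c * r) / csi_opt_denom (c * r) (c * K)"
proof -
  define X where "X = \<alpha> * \<rho>r * K * (2 powr (r / K) - 1)"
  have "0 \<le> X" using assms \<alpha>_pos \<rho>r_pos by (simp add: X_def ge_one_powr_ge_zero)
  have "c \<le> c\<^sup>2" using mult_left_mono[of 1 c c] assms by (simp add: power2_eq_square)
  then have "sqrt c \<le> c" using real_sqrt_le_mono assms by fastforce
  then have "sqrt (c * X) \<le> c * sqrt X"
    using \<open>0 \<le> X\<close> by (simp add: real_sqrt_mult mult_right_mono)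
  moreover have "csi_opt_denom (c * r) (c * K) = 2 * sqrt (c * X) + c * K * (\<rho>r + \<rho>d) + \<rho>s"
    using assms by (simp add: csi_opt_denom_def X_def ac_simps)
  moreover have "c * csi_opt_denom r K = 2 * (c * sqrt X) + c * K * (\<rho>r + \<rho>d) + c * \<rho>s"
    by (simp add: csi_opt_denom_def X_def algebra_simps)
  moreover have "\<rho>s < c * \<rho>s" using assms \<rho>s_pos by simp
  ultimately have "csi_opt_denom (c * r) (c * K) < c * csi_opt_denom r K" by linarith
  moreover have "0 < csi_opt_denom (c * r) (c * K)"
    using csi_opt_denom_ge[of "c * K" "c * r"] assms \<rho>s_pos by simp
  ultimately have "(c * r) / (c * csi_opt_denom r K) < (c * r) / csi_opt_denom (c * r) (c * K)"
    using assms by (intro divide_strict_left_mono) auto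
  then show ?thesis using assms by simp
qed

lemma csi_opt_ratio_lt:
  assumes "0 < K" "K \<le> K'" "r > 0" "r / K < r' / K'"
    and "\<alpha> * \<rho>r * K' * g_kernel (ln 2 * (r' / K')) < (K' * (\<rho>r + \<rho>d) + \<rho>s)\<^sup>2"
  shows "r / csi_opt_denom r K < r' / csi_opt_denom r' K'"
proof -
  define B where "B = sqrt (\<alpha> * \<rho>r * K')"
  define C where "C = K' * (\<rho>r + \<rho>d) + \<rho>s"
  define F where "F x = (2 * B * sqrt (exp (ln 2 * x) - 1) + C) / x" for x
  have pow: "2 powr x = exp (ln 2 * x)" for x :: real by (simp add: powr_def mult.commute)
  have "K' > 0" using assms by simp
  have "0 < r / K" using assms by simp
  then have "0 < r' / K'" using assms(4) by linarith
  then have "r' > 0" using \<open>K' > 0\<close> by (simp add: zero_less_divide_iff)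
  have "C > 0" using \<open>K' > 0\<close> \<rho>r_pos \<rho>d_pos \<rho>s_pos by (simp add: C_def add_pos_pos)
  have "B\<^sup>2 = \<alpha> * \<rho>r * K'" using \<open>K' > 0\<close> \<alpha>_pos \<rho>r_pos by (simp add: B_def)
  then have "F (r' / K') < F (r / K)"
    unfolding F_def using assms \<open>C > 0\<close>
    by (intro sqrt_exp_quotient_strict_antimono) (auto simp: B_def C_def)
  have F_pos: "0 < F x" if "x > 0" for x
  proof -
    have "1 < exp (ln 2 * x)" using that by simp
    then show ?thesis
      unfolding F_def using that \<open>K' > 0\<close> \<open>C > 0\<close> \<alpha>_pos \<rho>r_pos
      by (intro divide_pos_pos add_nonneg_pos mult_nonneg_nonneg) (auto simp: B_def)
  qed
  have "csi_opt_denom r' K' = (r' / K') * F (r' / K')"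
    using \<open>K' > 0\<close> \<open>r' > 0\<close> \<alpha>_pos \<rho>r_pos
    by (simp add: F_def csi_opt_denom_def pow B_def C_def real_sqrt_mult ac_simps)
  \<comment> \<open>replacing \<open>K\<close> by \<open>K'\<close> under the root and at \<open>\<rho>s\<close> costs at most the factor \<open>K'/K\<close>\<close>
  have "r * F (r / K) \<le> K' * csi_opt_denom r K"
  proof -
    define E where "E = 2 powr (r / K) - 1"
    have "0 \<le> E" using assms by (simp add: E_def ge_one_powr_ge_zero)
    have "K\<^sup>2 * (K' * (\<alpha> * \<rho>r * E)) \<le> K'\<^sup>2 * (K * (\<alpha> * \<rho>r * E))"
      using assms \<open>0 \<le> E\<close> \<alpha>_pos \<rho>r_pos
      by (simp add: power2_eq_square mult_left_mono mult_right_mono ac_simps)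
    then have "sqrt (K\<^sup>2 * (K' * (\<alpha> * \<rho>r * E))) \<le> sqrt (K'\<^sup>2 * (K * (\<alpha> * \<rho>r * E)))"
      by (rule real_sqrt_le_mono)
    then have "K * sqrt (K' * (\<alpha> * \<rho>r * E)) \<le> K' * sqrt (K * (\<alpha> * \<rho>r * E))"
      using assms \<open>K' > 0\<close> by (simp add: real_sqrt_mult)
    moreover have "K * \<rho>s \<le> K' * \<rho>s" using assms \<rho>s_pos by simp
    moreover have "r * F (r / K) = K * (2 * sqrt (K' * (\<alpha> * \<rho>r * E)) + C)"
      using assms by (simp add: F_def E_def pow B_def real_sqrt_mult ac_simps)
    ultimately show ?thesis
      by (simp add: C_def csi_opt_denom_def E_def[symmetric] algebra_simps)
  qed
  moreover have "0 < csi_opt_denom r K" using csi_opt_denom_ge[of K r] assms \<rho>s_pos by simp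
  ultimately have "r / csi_opt_denom r K \<le> K' / F (r / K)"
    using F_pos[of "r / K"] assms by (simp add: divide_simps mult.commute)
  also have "\<dots> < K' / F (r' / K')"
    using \<open>F (r' / K') < F (r / K)\<close> F_pos[of "r' / K'"] \<open>K' > 0\<close> \<open>r' > 0\<close>
    by (intro divide_strict_left_mono) auto
  also have "\<dots> = r' / csi_opt_denom r' K'"
    using \<open>csi_opt_denom r' K' = (r' / K') * F (r' / K')\<close> \<open>K' > 0\<close> \<open>r' > 0\<close> by simp
  finally show ?thesis .
qed

lemma zeta_csi'_lt:
  assumes "R > 0" "Km \<ge> 1"
    and "\<alpha> * \<rho>r * Km * g_kernel (ln 2 * (4 * R / 3 / Km)) < (Km * (\<rho>r + \<rho>d) + \<rho>s)\<^sup>2"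
  shows "csi' R < csi' (4 * R / 3)"
proof -
  obtain K where K: "1 \<le> K" "K \<le> Km" and attained: "csi' R = R / csi_opt_denom R K"
    using zeta_csi'_attained assms by blast
  have "R / csi_opt_denom R K < csi' (4 * R / 3)"
  proof (cases "4 * K / 3 \<le> Km")
    case True
    have "R / csi_opt_denom R K < (4 / 3 * R) / csi_opt_denom (4 / 3 * R) (4 / 3 * K)"
      using K assms by (intro csi_opt_ratio_lt_scaled) auto
    also have "\<dots> \<le> csi' (4 * R / 3)"
      using zeta_csi'_ge[of "4 * R / 3" "4 * K / 3"] True K assms by simp
    finally show ?thesis .
  next
    case False
    then have "R / K < (4 * R / 3) / Km" using K assms by (simp add: field_simps)
    then have "R / csi_opt_denom R K < (4 * R / 3) / csi_opt_denom (4 * R / 3) Km"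
      using K assms by (intro csi_opt_ratio_lt) auto
    also have "\<dots> \<le> csi' (4 * R / 3)" using zeta_csi'_ge[of "4 * R / 3" Km] assms by simp
    finally show ?thesis .
  qed
  then show ?thesis unfolding attained .
qed

lemma g_bound_imp_g_kernel_bound:
  assumes "R > 0" "Km > 0"
    and "\<rho>r > 3 * \<alpha> / (4 * (1 + \<rho>d / \<rho>r)\<^sup>2 * R) * (g (4 * R / (3 * Km)))\<^sup>2"
  shows "\<alpha> * \<rho>r * Km * g_kernel (ln 2 * (4 * R / 3 / Km)) < (Km * (\<rho>r + \<rho>d) + \<rho>s)\<^sup>2"
proof -
  define q where "q = g_kernel (ln 2 * (4 * R / 3 / Km))"
  define b where "b = (1 + \<rho>d / \<rho>r)\<^sup>2"
  have "0 < \<rho>d / \<rho>r" using \<rho>r_pos \<rho>d_pos by simp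
  then have "b > 0" unfolding b_def by (intro zero_less_power) linarith
  have "(g (4 * R / (3 * Km)))\<^sup>2 = 4 * R / (3 * Km) * q"
    using assms g_squared[of "4 * R / (3 * Km)"] by (simp add: q_def)
  moreover have "3 * \<alpha> / (4 * b * R) * (4 * R / (3 * Km) * q) = \<alpha> * q / (b * Km)"
    using assms \<open>b > 0\<close> by (simp add: field_simps)
  ultimately have "\<alpha> * q / (b * Km) < \<rho>r" using assms(3) by (simp add: b_def)
  then have "\<alpha> * q < \<rho>r * (b * Km)" using \<open>b > 0\<close> assms by (simp add: pos_divide_less_eq)
  then have "\<rho>r * Km * (\<alpha> * q) < \<rho>r * Km * (\<rho>r * (b * Km))"
    using \<rho>r_pos assms by (intro mult_strict_left_mono) auto
  also have "\<rho>r * Km * (\<rho>r * (b * Km)) = (Km * (\<rho>r + \<rho>d))\<^sup>2"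
    using \<rho>r_pos by (simp add: b_def field_simps power2_eq_square)
  also have "\<dots> \<le> (Km * (\<rho>r + \<rho>d) + \<rho>s)\<^sup>2"
    using assms \<rho>r_pos \<rho>d_pos \<rho>s_pos by (intro power_mono) auto
  finally show ?thesis by (simp add: q_def ac_simps)
qed

end

theorem lemma7:
  fixes R \<alpha> \<rho>r \<rho>d \<rho>s \<rho>0 T :: real
  assumes "R > 0"
    and "\<alpha> > 1" and "\<rho>r > 0" and "\<rho>d > 0" and "\<rho>s > 0" and "\<rho>0 > 0" and "T > 1"
    and "Kmax \<alpha> \<rho>r \<rho>d \<rho>s \<rho>0 T > 10"
    and "\<rho>r > \<alpha> / (2 * (\<rho>s / \<rho>r))"
    and "\<rho>r > 3 * \<alpha> / (4 * (1 + \<rho>d / \<rho>r)\<^sup>2 * R)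
                * (g (4 * R / (3 * Kmax \<alpha> \<rho>r \<rho>d \<rho>s \<rho>0 T)))\<^sup>2"
    and "\<rho>r < \<alpha> / (1 + \<rho>d / \<rho>r)\<^sup>2 * (g R)\<^sup>2 / R"
  shows "zeta_zf' R \<alpha> \<rho>r \<rho>d \<rho>s \<rho>0 T > 3 / 8 * zeta_csi' (4 * R / 3) \<alpha> \<rho>r \<rho>d \<rho>s \<rho>0 T
       \<and> 3 / 8 * zeta_csi' (4 * R / 3) \<alpha> \<rho>r \<rho>d \<rho>s \<rho>0 T > 3 / 8 * zeta_csi' R \<alpha> \<rho>r \<rho>d \<rho>s \<rho>0 T"
proof -
  interpret power_model \<alpha> \<rho>r \<rho>d \<rho>s \<rho>0 T
    using assms by unfold_locales auto
  have "\<alpha> / 2 < \<rho>s" using assms(3,5,9) by (simp add: field_simps)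
  have "Km \<ge> 1" using assms(8) by simp
  have "csi' R < csi' (4 * R / 3)"
    using assms(1,10) \<open>Km \<ge> 1\<close> by (intro zeta_csi'_lt g_bound_imp_g_kernel_bound) auto
  then show ?thesis
    using zeta_zf'_gt_zeta_csi'[OF assms(1) \<open>Km \<ge> 1\<close> \<open>\<alpha> / 2 < \<rho>s\<close>] by simp
qed

end
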